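(* Let $\mathcal{H}$ be a complex separable Hilbert space and let $T = MN - NM$ where $M, N \in \mathcal{B}(\mathcal{H})$ satisfy $M^2 = 0 = N^2$. Then for every $0 \ne \alpha \in \mathbb{C}$ and every integer $k \ge 1$, \[ \dim \ker (T - \alpha I)^k = \dim \ker (T + \alpha I)^k. \] *)

theory Defs
  imports "HOL-Analysis.Analysis"
begin

text \<open>A complex Hilbert space: a (real) Banach space whose norm is induced by a
  complex inner product, together with a complex scalar multiplication extending
  the real one.\<close>

class complex_hilbert_space = banach +
  fixes scaleC :: "complex \<Rightarrow> 'a \<Rightarrow> 'a" (infixr "*\<^sub>C" 75)
    and cinner :: "'a \<Rightarrow> 'a \<Rightarrow> complex"
  assumes scaleC_add_right: "a *\<^sub>C (x + y) = a *\<^sub>C x + a *\<^sub>C y"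
    and scaleC_add_left: "(a + b) *\<^sub>C x = a *\<^sub>C x + b *\<^sub>C x"
    and scaleC_scaleC: "a *\<^sub>C (b *\<^sub>C x) = (a * b) *\<^sub>C x"
    and scaleC_one: "1 *\<^sub>C x = x"
    and scaleC_of_real: "complex_of_real r *\<^sub>C x = r *\<^sub>R x"
    and cinner_add_left: "cinner (x + y) z = cinner x z + cinner y z"
    and cinner_scaleC_left: "cinner (a *\<^sub>C x) y = cnj a * cinner x y"
    and cinner_commute: "cinner y x = cnj (cinner x y)"
    and cinner_norm: "cinner x x = complex_of_real ((norm x)\<^sup>2)"

definition bounded_clinear_op :: "('a::complex_hilbert_space \<Rightarrow> 'a) \<Rightarrow> bool" where
  "bounded_clinear_op f \<longleftrightarrow>
     (\<forall>x y. f (x + y) = f x + f y) \<and> (\<forall>c x. f (c *\<^sub>C x) = c *\<^sub>C f x) \<and>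
     (\<exists>K. \<forall>x. norm (f x) \<le> norm x * K)"

definition ker :: "('a::complex_hilbert_space \<Rightarrow> 'a) \<Rightarrow> 'a set" where
  "ker f = {x. f x = 0}"

text \<open>Complex dimension of a subspace, with value \<open>\<infinity>\<close> for infinite-dimensional ones
  (in a separable space, all infinite-dimensional closed subspaces have the same
  Hilbert dimension \<open>\<aleph>\<^sub>0\<close>).\<close>
definition cdim :: "'a::complex_hilbert_space set \<Rightarrow> enat" where
  "cdim S = (if \<exists>B. finite B \<and> S \<subseteq> module.span scaleC B
             then enat (vector_space.dim scaleC S) else \<infinity>)"

end

theory Submission
  imports Defs
begin

text \<open>Put \<open>A = M + N\<close>. From \<open>M\<^sup>2 = N\<^sup>2 = 0\<close> one gets \<open>T A = - A T\<close> and
  \<open>A\<^sup>4 = (M N + N M)\<^sup>2 = T\<^sup>2\<close>. The first identity says \<open>(T + \<alpha>) A = - A (T - \<alpha>)\<close>, so \<open>A\<close>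
  maps \<open>ker (T - \<alpha>)\<^sup>k\<close> into \<open>ker (T + \<alpha>)\<^sup>k\<close>. The second gives \<open>ker A \<subseteq> ker T\<^sup>2\<close>, and the
  generalized eigenspaces of \<open>T\<close> for \<open>0\<close> and for \<open>\<alpha> \<noteq> 0\<close> meet only in \<open>0\<close>, so this map is
  injective. Exchanging \<open>\<alpha>\<close> and \<open>-\<alpha>\<close> gives the reverse inequality.\<close>

interpretation cv: vector_space "scaleC :: complex \<Rightarrow> 'a::complex_hilbert_space \<Rightarrow> 'a"
  by unfold_locales (simp_all add: scaleC_add_right scaleC_add_left scaleC_scaleC scaleC_one)

interpretation cvp: vector_space_pair
  "scaleC :: complex \<Rightarrow> 'a::complex_hilbert_space \<Rightarrow> 'a" "scaleC :: complex \<Rightarrow> 'a \<Rightarrow> 'a" ..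

abbreviation clinear :: "('a::complex_hilbert_space \<Rightarrow> 'a) \<Rightarrow> bool" where
  "clinear \<equiv> Vector_Spaces.linear scaleC scaleC"

lemma bounded_clinear_op_imp_clinear: "bounded_clinear_op f \<Longrightarrow> clinear f"
  unfolding bounded_clinear_op_def Vector_Spaces.linear_iff
  using cv.vector_space_axioms by blast

lemma clinear_funpow: "clinear f \<Longrightarrow> clinear (f ^^ n)"
  by (induction n) (auto intro: cv.linear_id Vector_Spaces.linear_compose)

lemma clinear_shift: "clinear f \<Longrightarrow> clinear (\<lambda>x. f x - c *\<^sub>C x)"
  by (intro cvp.linear_compose_sub cv.linear_scale_self)

lemma subspace_ker: "clinear f \<Longrightarrow> cv.subspace (ker f)"
  unfolding ker_def by (rule cvp.linear_subspace_kernel)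

definition ecard :: "'a set \<Rightarrow> enat" where
  "ecard A = (if finite A then enat (card A) else \<infinity>)"

lemma ecard_image: "inj_on f A \<Longrightarrow> ecard (f ` A) = ecard A"
  by (simp add: ecard_def card_image finite_image_iff)

lemma ecard_mono: "A \<subseteq> B \<Longrightarrow> ecard A \<le> ecard B"
  by (auto simp: ecard_def card_mono dest: finite_subset)

lemma cdim_eq_ecard_basis:
  assumes "B \<subseteq> S" "cv.independent B" "S \<subseteq> cv.span B"
  shows "cdim S = ecard B"
proof (cases "finite B")
  case True
  then show ?thesis
    using assms cv.basis_card_eq_dim[OF assms(1,3,2)] by (auto simp: cdim_def ecard_def)
next
  case False
  have "\<not> (finite C \<and> S \<subseteq> cv.span C)" for C
    using False assms(1,2) cv.independent_span_bound[of C B] by blast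
  then show ?thesis
    using False by (auto simp: cdim_def ecard_def)
qed

lemma ecard_le_cdim:
  assumes "B \<subseteq> S" "cv.independent B"
  shows "ecard B \<le> cdim S"
proof -
  obtain C where C: "B \<subseteq> C" "C \<subseteq> S" "cv.independent C" "S \<subseteq> cv.span C"
    using cv.maximal_independent_subset_extend[OF assms] by blast
  have "ecard B \<le> ecard C"
    using C(1) by (rule ecard_mono)
  also have "\<dots> = cdim S"
    using cdim_eq_ecard_basis[OF C(2-4)] by simp
  finally show ?thesis .
qed

lemma cdim_le_if_inj_on:
  assumes f: "clinear f" and S: "cv.subspace S" and "f ` S \<subseteq> S'" and inj: "inj_on f S"
  shows "cdim S \<le> cdim S'"
proof -
  obtain B where B: "B \<subseteq> S" "cv.independent B" "S \<subseteq> cv.span B"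
    using cv.maximal_independent_subset by blast
  have "f ` B \<subseteq> S'"
    using B(1) \<open>f ` S \<subseteq> S'\<close> by blast
  have "cv.span B = S"
    using cv.span_subspace[OF B(1,3) S] .
  then have "cv.independent (f ` B)"
    using cvp.linear_independent_injective_image[OF f B(2)] inj by simp
  have "cdim S = ecard B"
    using cdim_eq_ecard_basis[OF B] .
  also have "\<dots> = ecard (f ` B)"
    using ecard_image[OF inj_on_subset[OF inj B(1)]] by simp
  also have "\<dots> \<le> cdim S'"
    using \<open>f ` B \<subseteq> S'\<close> \<open>cv.independent (f ` B)\<close> by (rule ecard_le_cdim)
  finally show ?thesis .
qed

lemma eigenvector_funpow:
  assumes "clinear T" "T x = \<beta> *\<^sub>C x"
  shows "(T ^^ m) x = \<beta> ^ m *\<^sub>C x"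
  by (induction m) (simp_all add: assms cvp.linear_scale mult.commute)

lemma generalized_eigenspaces_disjoint:
  assumes T: "clinear T" and "\<beta> \<noteq> 0"
  shows "(T ^^ m) x = 0 \<Longrightarrow> ((\<lambda>x. T x - \<beta> *\<^sub>C x) ^^ n) x = 0 \<Longrightarrow> x = 0"
proof (induction n arbitrary: x)
  case 0
  then show ?case by simp
next
  case (Suc n)
  let ?U = "\<lambda>x. T x - \<beta> *\<^sub>C x"
  have "(T ^^ m) (?U x) = 0"
    using Suc.prems(1) clinear_funpow[OF T]
    by (simp add: cvp.linear_diff cvp.linear_scale funpow_swap1[symmetric] cvp.linear_0[OF T])
  moreover have "(?U ^^ n) (?U x) = 0"
    using Suc.prems(2) by (simp add: funpow_Suc_right del: funpow.simps)
  ultimately have "?U x = 0"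
    by (rule Suc.IH)
  then have "(T ^^ m) x = \<beta> ^ m *\<^sub>C x"
    using eigenvector_funpow[OF T] by simp
  with Suc.prems(1) \<open>\<beta> \<noteq> 0\<close> show "x = 0"
    by simp
qed

lemma funpow_intertwine_neg:
  fixes A :: "'a \<Rightarrow> 'b::group_add"
  assumes "\<And>x. V (A x) = - A (U x)" "\<And>y. V (- y) = - V y"
  shows "(V ^^ n) (A x) = (if even n then A ((U ^^ n) x) else - A ((U ^^ n) x))"
  by (induction n) (auto simp: assms)

lemma cdim_generalized_eigenspace_le_neg:
  assumes T: "clinear T" and A: "clinear A"
    and anticomm: "\<And>x. T (A x) = - A (T x)"
    and ker_A: "ker A \<subseteq> ker (T ^^ m)" and "\<beta> \<noteq> 0"
  shows "cdim (ker ((\<lambda>x. T x - \<beta> *\<^sub>C x) ^^ k)) \<le> cdim (ker ((\<lambda>x. T x + \<beta> *\<^sub>C x) ^^ k))"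
proof (rule cdim_le_if_inj_on[OF A])
  let ?U = "\<lambda>x. T x - \<beta> *\<^sub>C x" and ?V = "\<lambda>x. T x + \<beta> *\<^sub>C x"
  show subspace: "cv.subspace (ker (?U ^^ k))"
    by (intro subspace_ker clinear_funpow clinear_shift T)
  have intertwine: "?V (A x) = - A (?U x)" for x
    using anticomm by (simp add: cvp.linear_diff[OF A] cvp.linear_scale[OF A])
  have odd: "?V (- y) = - ?V y" for y
    by (simp add: cvp.linear_neg[OF T])
  have "(?V ^^ k) (A x) = (if even k then A ((?U ^^ k) x) else - A ((?U ^^ k) x))" for x
    using funpow_intertwine_neg[of ?V A ?U, OF intertwine odd] .
  then show "A ` ker (?U ^^ k) \<subseteq> ker (?V ^^ k)"
    by (auto simp: ker_def cvp.linear_0[OF A])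
  show "inj_on A (ker (?U ^^ k))"
  proof (subst cvp.linear_inj_on_iff_eq_0[OF A subspace], intro ballI impI)
    fix x assume "x \<in> ker (?U ^^ k)" and "A x = 0"
    then have "(T ^^ m) x = 0" and "(?U ^^ k) x = 0"
      using ker_A by (auto simp: ker_def)
    then show "x = 0"
      by (rule generalized_eigenspaces_disjoint[OF T \<open>\<beta> \<noteq> 0\<close>])
  qed
qed

lemma square_zero_sum_commutator_identities:
  fixes M N :: "'a::ab_group_add \<Rightarrow> 'a"
  assumes M: "Modules.additive M" and N: "Modules.additive N"
    and "\<And>x. M (M x) = 0" "\<And>x. N (N x) = 0"
  defines "A \<equiv> \<lambda>x. M x + N x" and "T \<equiv> \<lambda>x. M (N x) - N (M x)"
  shows "T (A x) = - A (T x)" and "A (A (A (A x))) = T (T x)"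
  using assms(3,4)
  by (simp_all add: A_def T_def additive.add[OF M] additive.add[OF N] additive.diff[OF M]
      additive.diff[OF N] additive.minus[OF M] additive.minus[OF N] additive.zero[OF M]
      additive.zero[OF N])

theorem theorem2p08:
  fixes M N :: "'a::complex_hilbert_space \<Rightarrow> 'a"
    and \<alpha> :: complex and k :: nat
  assumes separable: "\<exists>D. countable D \<and> closure D = (UNIV :: 'a set)"
    and M: "bounded_clinear_op M" and N: "bounded_clinear_op N"
    and M2: "\<forall>x. M (M x) = 0" and N2: "\<forall>x. N (N x) = 0"
    and alpha: "\<alpha> \<noteq> 0" and k: "k \<ge> 1"
  defines "T \<equiv> (\<lambda>x. M (N x) - N (M x))"
  shows "cdim (ker ((\<lambda>x. T x - \<alpha> *\<^sub>C x) ^^ k)) = cdim (ker ((\<lambda>x. T x + \<alpha> *\<^sub>C x) ^^ k))"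
proof -
  have lin_M: "clinear M" and lin_N: "clinear N"
    using M N by (simp_all add: bounded_clinear_op_imp_clinear)
  define A where "A = (\<lambda>x. M x + N x)"
  have lin_A: "clinear A"
    unfolding A_def using lin_M lin_N by (rule cvp.linear_compose_add)
  have lin_T: "clinear T"
    unfolding T_def using Vector_Spaces.linear_compose[OF lin_N lin_M]
      Vector_Spaces.linear_compose[OF lin_M lin_N] by (simp add: cvp.linear_compose_sub o_def)
  have additive: "Modules.additive M" "Modules.additive N"
    using lin_M lin_N by (simp_all add: Modules.additive.intro cvp.linear_add)
  have anticomm: "T (A x) = - A (T x)" and fourth_power: "A (A (A (A x))) = T (T x)" for x
    unfolding A_def T_def
    by (rule square_zero_sum_commutator_identities[OF additive M2[rule_format] N2[rule_format]])+
  have ker_A: "ker A \<subseteq> ker (T ^^ 2)"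
    by (auto simp: ker_def numeral_2_eq_2 fourth_power[symmetric] cvp.linear_0[OF lin_A])
  show ?thesis
  proof (rule antisym)
    show "cdim (ker ((\<lambda>x. T x - \<alpha> *\<^sub>C x) ^^ k)) \<le> cdim (ker ((\<lambda>x. T x + \<alpha> *\<^sub>C x) ^^ k))"
      by (rule cdim_generalized_eigenspace_le_neg[OF lin_T lin_A anticomm ker_A alpha])
    show "cdim (ker ((\<lambda>x. T x + \<alpha> *\<^sub>C x) ^^ k)) \<le> cdim (ker ((\<lambda>x. T x - \<alpha> *\<^sub>C x) ^^ k))"
      using cdim_generalized_eigenspace_le_neg[OF lin_T lin_A anticomm ker_A, of "- \<alpha>" k] alpha
      by simp
  qed
qed

end
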